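(* For every $F$-linear subspace $V$ of $M_n$ there exists a quasi-polynomial $P\in\mathcal C\langle X\rangle$ such that $\mathrm{im}(P)=V$, where for $P$ involving only $x_1,\dots,x_m$ (and coordinates $x^{(k)}_{ij}$, $k\le m$), $\mathrm{im}(P)=\{P(A_1,\dots,A_m): A_1,\dots,A_m\in M_n\}$.
   Context: Let $F$ be a field of characteristic $0$, $n\ge1$, $M_n=M_n(F)$. Let $\mathcal C=F[x^{(k)}_{ij}:1\le i,j\le n,\ k=1,2,\dots]$ and $X=\{x_1,x_2,\dots\}$ noncommuting indeterminates; quasi-polynomials are elements of the free $\mathcal C$-algebra $\mathcal C\langle X\rangle$. The evaluation $P(A_1,\dots,A_m)$ at $A_k=(a^{(k)}_{ij})\in M_n$ is obtained by substituting $A_k$ for $x_k$ and $a^{(k)}_{ij}$ for $x^{(k)}_{ij}$. *)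

theory Defs
  imports "HOL-Analysis.Analysis"
begin

text \<open>Quasi-polynomials: elements of the free algebra C<X> over
  C = F[x^(k)_ij], represented by expression trees (every element of the
  free C-algebra is denoted by such an expression, and evaluation is a
  homomorphism, so images coincide).  Matrices are of type 'a^'n^'n,
  i.e. n = CARD('n) >= 1.  Variables x_1, x_2, ... are indexed from 0.\<close>

datatype ('a, 'n) qpoly =
    QVar nat
  | QCoord nat 'n 'n      \<comment> \<open>commuting indeterminate x^(k)_ij in C\<close>
  | QConst 'a
  | QAdd "('a, 'n) qpoly" "('a, 'n) qpoly"
  | QMul "('a, 'n) qpoly" "('a, 'n) qpoly"

definition scal_mat :: "'a::semiring_1 \<Rightarrow> 'a^'n^'n" where
  "scal_mat c = (\<chi> i j. if i = j then c else 0)"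

primrec qeval :: "(nat \<Rightarrow> 'a::semiring_1^'n^'n) \<Rightarrow> ('a, 'n::finite) qpoly \<Rightarrow> 'a^'n^'n" where
  "qeval A (QVar k) = A k"
| "qeval A (QCoord k i j) = scal_mat ((A k) $ i $ j)"
| "qeval A (QConst c) = scal_mat c"
| "qeval A (QAdd p q) = qeval A p + qeval A q"
| "qeval A (QMul p q) = qeval A p ** qeval A q"

text \<open>Since P involves only finitely many variables and its value depends only on
  those, ranging over all sequences of matrices gives the same set as
  ranging over (A_1,...,A_m).\<close>
definition qimage :: "('a::semiring_1, 'n::finite) qpoly \<Rightarrow> ('a^'n^'n) set" where
  "qimage P = {qeval A P | A. True}"

definition mat_subspace :: "('a::field^'n^'n) set \<Rightarrow> bool" where
  "mat_subspace V \<longleftrightarrow> 0 \<in> V \<and> (\<forall>X\<in>V. \<forall>Y\<in>V. X + Y \<in> V)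
     \<and> (\<forall>c. \<forall>X\<in>V. (\<chi> i j. c * X $ i $ j) \<in> V)"

end

theory Submission
  imports Defs
begin

text \<open>The image of x1 is all of M_n.  If P has image a subspace W and the linear form
  \<lambda>(M) = \<Sum> C_ij M_ij does not vanish on W, pick N \<in> W with \<lambda>(N) = 1; then
  \<lambda>(P(y)) P(x) - \<lambda>(P(x)) P(y), with x and y disjoint sets of variables, has image
  exactly W \<inter> ker \<lambda>: the value at y = N is P(x) itself whenever \<lambda>(P(x)) = 0.
  Since \<lambda>(P(x)) is a quasi-polynomial (a scalar), iterating this realises every
  intersection of hyperplanes, in particular every line F m.  Adding quasi-polynomials
  in disjoint variables realises sums of images, so the span of a finite basis of V,
  i.e. V itself, is an image.\<close>

definition mat_scale :: "'a::field \<Rightarrow> 'a^'n^'n \<Rightarrow> 'a^'n^'n" where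
  "mat_scale c M = (\<chi> i j. c * M $ i $ j)"

lemma mat_scale_nth [simp]: "mat_scale c M $ i $ j = c * M $ i $ j"
  by (simp add: mat_scale_def)

interpretation mat: vector_space "mat_scale :: 'a::field \<Rightarrow> 'a^'n^'n \<Rightarrow> 'a^'n^'n"
  by unfold_locales (simp_all add: vec_eq_iff algebra_simps)

lemma mat_subspace_iff: "mat_subspace V \<longleftrightarrow> mat.subspace V"
  unfolding mat_subspace_def mat.subspace_def mat_scale_def ..

definition mat_unit :: "'n \<Rightarrow> 'n \<Rightarrow> 'a::comm_ring_1^'n^'n" where
  "mat_unit r s = (\<chi> i j. if i = r \<and> j = s then 1 else 0)"

lemma mat_span_units: "mat.span (range (case_prod mat_unit)) = (UNIV :: ('a::field^'n::finite^'n) set)"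
proof -
  have "M = (\<Sum>rs\<in>UNIV. mat_scale (M $ fst rs $ snd rs) (mat_unit (fst rs) (snd rs)))"
    for M :: "'a^'n^'n"
  proof -
    have "(\<Sum>rs\<in>UNIV. mat_scale (M $ fst rs $ snd rs) (mat_unit (fst rs) (snd rs))) $ i $ j
        = (\<Sum>rs\<in>UNIV. if rs = (i, j) then M $ i $ j else 0)" for i j
      unfolding sum_component by (intro sum.cong refl) (auto simp: mat_unit_def)
    then show ?thesis by (simp add: vec_eq_iff)
  qed
  moreover have "(\<Sum>rs\<in>UNIV. mat_scale (M $ fst rs $ snd rs) (mat_unit (fst rs) (snd rs)))
      \<in> mat.span (range (case_prod mat_unit))" for M :: "'a^'n^'n"
    by (intro mat.span_sum mat.span_scale mat.span_base) (auto simp: case_prod_beta)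
  ultimately show ?thesis by (metis UNIV_eq_I)
qed

lemma mat_independent_finite:
  fixes B :: "('a::field^'n::finite^'n) set"
  assumes "mat.independent B"
  shows "finite B"
  using mat.independent_span_bound[OF _ assms, of "range (case_prod mat_unit)"]
  by (simp add: mat_span_units)

lemma if_mult_zero: "(if P then c else 0) * (x::'a::semiring_0) = (if P then c * x else 0)"
  by simp

lemma scal_mat_nth [simp]: "scal_mat c $ i $ j = (if i = j then c else 0)"
  by (simp add: scal_mat_def)

lemma scal_mat_add: "(scal_mat (a + b) :: 'a::semiring_1^'n^'n) = scal_mat a + scal_mat b"
  by (simp add: vec_eq_iff)

lemma scal_mat_sum: "scal_mat (sum f S) = (\<Sum>x\<in>S. scal_mat (f x) :: 'a::semiring_1^'n^'n)"
  by (induction S rule: infinite_finite_induct) (auto simp: scal_mat_add vec_eq_iff)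

lemma scal_mat_mult_left: "(scal_mat c :: 'a::comm_ring_1^'n^'n) ** M = (\<chi> i j. c * M $ i $ j)"
  by (simp add: vec_eq_iff matrix_matrix_mult_def scal_mat_def if_mult_zero)

lemma scal_mat_mult: "(scal_mat a :: 'a::comm_ring_1^'n^'n) ** scal_mat b = scal_mat (a * b)"
  by (simp add: scal_mat_mult_left vec_eq_iff)

primrec qrename :: "(nat \<Rightarrow> nat) \<Rightarrow> ('a, 'n) qpoly \<Rightarrow> ('a, 'n) qpoly" where
  "qrename g (QVar k) = QVar (g k)"
| "qrename g (QCoord k i j) = QCoord (g k) i j"
| "qrename g (QConst c) = QConst c"
| "qrename g (QAdd p q) = QAdd (qrename g p) (qrename g q)"
| "qrename g (QMul p q) = QMul (qrename g p) (qrename g q)"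

lemma qeval_qrename [simp]: "qeval A (qrename g P) = qeval (A \<circ> g) P"
  by (induction P) auto

definition interleave :: "(nat \<Rightarrow> 'b) \<Rightarrow> (nat \<Rightarrow> 'b) \<Rightarrow> nat \<Rightarrow> 'b" where
  "interleave A B k = (if even k then A (k div 2) else B (k div 2))"

lemma interleave_comp_even [simp]: "interleave A B \<circ> (\<lambda>k. 2 * k) = A"
  by (simp add: fun_eq_iff interleave_def)

lemma interleave_comp_odd [simp]: "interleave A B \<circ> (\<lambda>k. Suc (2 * k)) = B"
  by (simp add: fun_eq_iff interleave_def)

lemma qimage_disjoint_add:
  "qimage (QAdd (qrename (\<lambda>k. 2 * k) P) (qrename (\<lambda>k. Suc (2 * k)) Q))
     = {x + y | x y. x \<in> qimage P \<and> y \<in> qimage Q}"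
proof (intro equalityI subsetI)
  fix z assume "z \<in> {x + y | x y. x \<in> qimage P \<and> y \<in> qimage Q}"
  then obtain A B where "z = qeval A P + qeval B Q" by (auto simp: qimage_def)
  then have "z = qeval (interleave A B)
      (QAdd (qrename (\<lambda>k. 2 * k) P) (qrename (\<lambda>k. Suc (2 * k)) Q))"
    by simp
  then show "z \<in> qimage (QAdd (qrename (\<lambda>k. 2 * k) P) (qrename (\<lambda>k. Suc (2 * k)) Q))"
    unfolding qimage_def by blast
qed (auto simp: qimage_def)

lemma qimage_zero: "qimage (QConst 0) = {0}"
proof -
  have "scal_mat 0 = 0" by (simp add: vec_eq_iff)
  then show ?thesis by (simp add: qimage_def)
qed

definition qsum :: "('a::zero, 'n) qpoly list \<Rightarrow> ('a, 'n) qpoly" where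
  "qsum ps = foldr QAdd ps (QConst 0)"

lemma qeval_qsum: "qeval A (qsum (map f xs)) = (\<Sum>x\<leftarrow>xs. qeval A (f x))"
  by (induction xs) (auto simp: qsum_def vec_eq_iff)

definition univ_list :: "'n::finite list" where
  "univ_list = (SOME xs. set xs = UNIV \<and> distinct xs)"

lemma univ_list: "set (univ_list :: 'n::finite list) = UNIV \<and> distinct (univ_list :: 'n list)"
  unfolding univ_list_def
  by (rule someI_ex) (use finite_distinct_list[of "UNIV :: 'n set"] in auto)

lemma sum_list_univ_list: "(\<Sum>x\<leftarrow>(univ_list :: 'n::finite list). f x) = (\<Sum>x\<in>UNIV. f x)"
  using univ_list by (metis sum_list_distinct_conv_sum_set)

primrec qentry :: "('a::zero, 'n::finite) qpoly \<Rightarrow> 'n \<Rightarrow> 'n \<Rightarrow> ('a, 'n) qpoly" where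
  "qentry (QVar k) i j = QCoord k i j"
| "qentry (QCoord k a b) i j = (if i = j then QCoord k a b else QConst 0)"
| "qentry (QConst c) i j = (if i = j then QConst c else QConst 0)"
| "qentry (QAdd p q) i j = QAdd (qentry p i j) (qentry q i j)"
| "qentry (QMul p q) i j = qsum (map (\<lambda>r. QMul (qentry p i r) (qentry q r j)) univ_list)"

lemma qeval_qentry: "qeval A (qentry P i j) = scal_mat (qeval A P $ i $ j :: 'a::comm_ring_1)"
proof (induction P arbitrary: i j)
  case (QMul p q)
  have "qeval A (qentry (QMul p q) i j)
      = (\<Sum>r\<in>UNIV. scal_mat (qeval A p $ i $ r * qeval A q $ r $ j))"
    by (simp add: qeval_qsum sum_list_univ_list QMul scal_mat_mult)
  also have "\<dots> = scal_mat (\<Sum>r\<in>UNIV. qeval A p $ i $ r * qeval A q $ r $ j)"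
    by (simp add: scal_mat_sum)
  finally show ?case by (simp add: matrix_matrix_mult_def)
qed (auto simp: scal_mat_add vec_eq_iff)

definition mat_pairing :: "'a::comm_ring_1^'n^'n \<Rightarrow> 'a^'n^'n \<Rightarrow> 'a" where
  "mat_pairing C M = (\<Sum>i\<in>UNIV. \<Sum>j\<in>UNIV. C $ i $ j * M $ i $ j)"

lemma mat_pairing_scale: "mat_pairing C (mat_scale c M) = c * mat_pairing C M"
  by (simp add: mat_pairing_def sum_distrib_left algebra_simps)

lemma mat_pairing_add: "mat_pairing C (M + N) = mat_pairing C M + mat_pairing C N"
  by (simp add: mat_pairing_def algebra_simps sum.distrib)

lemma mat_pairing_diff: "mat_pairing C (M - N) = mat_pairing C M - mat_pairing C N"
  by (simp add: mat_pairing_def algebra_simps sum_subtractf)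

lemma mat_pairing_diff_left: "mat_pairing (C - D) M = mat_pairing C M - mat_pairing D M"
  by (simp add: mat_pairing_def algebra_simps sum_subtractf)

lemma mat_pairing_scale_left: "mat_pairing (mat_scale c C) M = c * mat_pairing C M"
  by (simp add: mat_pairing_def sum_distrib_left algebra_simps)

lemma mat_pairing_unit: "mat_pairing (mat_unit r s) M = M $ r $ s"
proof -
  have "mat_pairing (mat_unit r s) M = (\<Sum>i\<in>UNIV. if i = r then M $ r $ s else 0)"
    unfolding mat_pairing_def mat_unit_def
    by (intro sum.cong refl) (auto simp: if_mult_zero)
  then show ?thesis by simp
qed

definition qpairing :: "'a::comm_ring_1^'n^'n \<Rightarrow> ('a, 'n::finite) qpoly \<Rightarrow> ('a, 'n) qpoly" where
  "qpairing C P = qsum (map (\<lambda>i. qsum (map (\<lambda>j. QMul (QConst (C $ i $ j)) (qentry P i j))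
     univ_list)) univ_list)"

lemma qeval_qpairing: "qeval A (qpairing C P) = scal_mat (mat_pairing C (qeval A P))"
  by (simp add: qpairing_def mat_pairing_def qeval_qsum sum_list_univ_list qeval_qentry
      scal_mat_mult scal_mat_sum)

definition qcut :: "'a::field^'n^'n \<Rightarrow> ('a, 'n::finite) qpoly \<Rightarrow> ('a, 'n) qpoly" where
  "qcut C P = QAdd (QMul (qpairing C (qrename (\<lambda>k. Suc (2 * k)) P)) (qrename (\<lambda>k. 2 * k) P))
     (QMul (QConst (-1)) (QMul (qpairing C (qrename (\<lambda>k. 2 * k) P)) (qrename (\<lambda>k. Suc (2 * k)) P)))"

lemma qeval_qcut:
  "qeval A (qcut C P)
     = mat_scale (mat_pairing C (qeval (A \<circ> (\<lambda>k. Suc (2 * k))) P)) (qeval (A \<circ> (\<lambda>k. 2 * k)) P)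
       - mat_scale (mat_pairing C (qeval (A \<circ> (\<lambda>k. 2 * k)) P)) (qeval (A \<circ> (\<lambda>k. Suc (2 * k))) P)"
  by (simp add: qcut_def qeval_qpairing scal_mat_mult_left vec_eq_iff)

lemma qimage_qcut:
  assumes image: "qimage P = W" and subspace: "mat.subspace W"
    and N: "N \<in> W" "mat_pairing C N = 1"
  shows "qimage (qcut C P) = {M \<in> W. mat_pairing C M = 0}"
proof (intro equalityI subsetI)
  fix M assume "M \<in> qimage (qcut C P)"
  then obtain A where "M = qeval A (qcut C P)" by (auto simp: qimage_def)
  moreover define X Y
    where "X = qeval (A \<circ> (\<lambda>k. 2 * k)) P" and "Y = qeval (A \<circ> (\<lambda>k. Suc (2 * k))) P"
  ultimately have M: "M = mat_scale (mat_pairing C Y) X - mat_scale (mat_pairing C X) Y"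
    by (simp add: qeval_qcut)
  have "X \<in> W" "Y \<in> W" using image by (auto simp: X_def Y_def qimage_def)
  then show "M \<in> {M \<in> W. mat_pairing C M = 0}"
    unfolding M using subspace
    by (auto simp: mat.subspace_diff mat.subspace_scale mat_pairing_diff mat_pairing_scale)
next
  fix M assume M: "M \<in> {M \<in> W. mat_pairing C M = 0}"
  then obtain A where A: "M = qeval A P" using image by (auto simp: qimage_def)
  obtain B where B: "N = qeval B P" using image N(1) by (auto simp: qimage_def)
  have "qeval (interleave A B) (qcut C P) = M"
    using M N(2) by (simp add: qeval_qcut A[symmetric] B[symmetric] vec_eq_iff)
  then show "M \<in> qimage (qcut C P)" unfolding qimage_def by blast
qed

definition common_kernel :: "('a::field^'n^'n) list \<Rightarrow> ('a^'n^'n) set" where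
  "common_kernel Cs = {M. \<forall>C\<in>set Cs. mat_pairing C M = 0}"

lemma subspace_common_kernel: "mat.subspace (common_kernel Cs)"
  by (auto simp: mat.subspace_def common_kernel_def mat_pairing_add mat_pairing_scale,
      simp add: mat_pairing_def)

text \<open>A form vanishing on the current image is skipped: cutting by it would give
  the zero image instead.\<close>

fun qkernel :: "('a::field^'n^'n) list \<Rightarrow> ('a, 'n::finite) qpoly" where
  "qkernel [] = QVar 0"
| "qkernel (C # Cs) =
     (if \<forall>M\<in>common_kernel Cs. mat_pairing C M = 0 then qkernel Cs else qcut C (qkernel Cs))"

lemma qimage_qkernel: "qimage (qkernel Cs) = common_kernel Cs"
proof (induction Cs)
  case Nil
  have "M = (\<lambda>_. M) 0" for M :: "'a^'n^'n" by simp
  then show ?case by (auto simp: qimage_def common_kernel_def)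
next
  case (Cons C Cs)
  have kernel_Cons: "common_kernel (C # Cs) = {M \<in> common_kernel Cs. mat_pairing C M = 0}"
    by (auto simp: common_kernel_def)
  show ?case
  proof (cases "\<forall>M\<in>common_kernel Cs. mat_pairing C M = 0")
    case True
    then show ?thesis using Cons by (auto simp: kernel_Cons)
  next
    case False
    then obtain N0 where N0: "N0 \<in> common_kernel Cs" "mat_pairing C N0 \<noteq> 0" by blast
    let ?N = "mat_scale (1 / mat_pairing C N0) N0"
    have "?N \<in> common_kernel Cs" "mat_pairing C ?N = 1"
      using N0 by (auto simp: common_kernel_def mat_pairing_scale)
    moreover have "qkernel (C # Cs) = qcut C (qkernel Cs)"
      using False by (simp only: qkernel.simps if_False)
    ultimately show ?thesis
      by (simp add: qimage_qcut[OF Cons subspace_common_kernel] kernel_Cons)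
  qed
qed

text \<open>M is a multiple of m iff all 2 x 2 minors of the pair (m, M) vanish.\<close>

definition minor_form :: "'a::field^'n^'n \<Rightarrow> 'n \<Rightarrow> 'n \<Rightarrow> 'n \<Rightarrow> 'n \<Rightarrow> 'a^'n^'n" where
  "minor_form m p q r s = mat_scale (m $ p $ q) (mat_unit r s) - mat_scale (m $ r $ s) (mat_unit p q)"

lemma mat_pairing_minor_form:
  "mat_pairing (minor_form m p q r s) M = m $ p $ q * M $ r $ s - m $ r $ s * M $ p $ q"
  by (simp add: minor_form_def mat_pairing_diff_left mat_pairing_scale_left mat_pairing_unit)

definition parallel_forms :: "'a::field^'n::finite^'n \<Rightarrow> ('a^'n^'n) list" where
  "parallel_forms m = map (\<lambda>(p, q, r, s). minor_form m p q r s) univ_list"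

lemma common_kernel_parallel_forms_iff:
  "M \<in> common_kernel (parallel_forms m) \<longleftrightarrow>
     (\<forall>p q r s. m $ p $ q * M $ r $ s = m $ r $ s * M $ p $ q)"
  by (simp add: common_kernel_def parallel_forms_def univ_list mat_pairing_minor_form)

lemma common_kernel_parallel_forms:
  assumes "m \<noteq> 0"
  shows "common_kernel (parallel_forms m) = range (\<lambda>c. mat_scale c m)"
proof (intro equalityI subsetI)
  fix M assume "M \<in> common_kernel (parallel_forms m)"
  then have minors: "m $ p $ q * M $ r $ s = m $ r $ s * M $ p $ q" for p q r s
    by (simp add: common_kernel_parallel_forms_iff)
  obtain p q where pq: "m $ p $ q \<noteq> 0" using assms by (auto simp: vec_eq_iff)
  define c where "c = M $ p $ q / m $ p $ q"
  have "M $ r $ s = c * m $ r $ s" for r s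
    using minors[of p q r s] pq by (simp add: c_def field_simps)
  then have "M = mat_scale c m" by (simp add: vec_eq_iff)
  then show "M \<in> range (\<lambda>c. mat_scale c m)" by blast
next
  fix M assume "M \<in> range (\<lambda>c. mat_scale c m)"
  then show "M \<in> common_kernel (parallel_forms m)"
    by (auto simp: common_kernel_parallel_forms_iff mult.left_commute)
qed

definition qline :: "'a::field^'n^'n \<Rightarrow> ('a, 'n::finite) qpoly" where
  "qline m = (if m = 0 then QConst 0 else qkernel (parallel_forms m))"

lemma qimage_qline: "qimage (qline m) = mat.span {m}"
proof (cases "m = 0")
  case True
  then have "qline m = QConst 0" by (simp add: qline_def)
  then show ?thesis using True by (simp only: qimage_zero mat.span_insert_0 mat.span_empty)
next
  case False
  then have "qline m = qkernel (parallel_forms m)" by (simp add: qline_def)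
  then show ?thesis
    by (simp only: qimage_qkernel common_kernel_parallel_forms[OF False] mat.span_singleton)
qed

fun qspan :: "('a::field^'n^'n) list \<Rightarrow> ('a, 'n::finite) qpoly" where
  "qspan [] = QConst 0"
| "qspan (m # ms) = QAdd (qrename (\<lambda>k. 2 * k) (qline m)) (qrename (\<lambda>k. Suc (2 * k)) (qspan ms))"

lemma qimage_qspan: "qimage (qspan ms) = mat.span (set ms)"
proof (induction ms)
  case Nil
  show ?case by (simp add: qimage_zero)
next
  case (Cons m ms)
  show ?case
    unfolding qspan.simps qimage_disjoint_add qimage_qline Cons mat.span_Un[symmetric] by simp
qed

theorem mainTheorem3:
  fixes V :: "('a::field_char_0 ^ 'n ^ 'n) set"
  assumes "mat_subspace V"
  shows "\<exists>P :: ('a, 'n) qpoly. qimage P = V"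
proof -
  obtain B where B: "B \<subseteq> V" "mat.independent B" "V \<subseteq> mat.span B"
    by (rule mat.basis_exists)
  obtain ms where "set ms = B"
    using finite_list[OF mat_independent_finite[OF B(2)]] by blast
  moreover have "mat.span B = V"
    using B assms by (simp add: mat_subspace_iff mat.span_subspace)
  ultimately have "qimage (qspan ms) = V" by (simp add: qimage_qspan)
  then show ?thesis by blast
qed

end
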